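(* Let $G=(V,E)$ be a connected simple graph and let $R_{u,v}$ denote the effective resistance between $u$ and $v$ in the network $\mathcal{N}_G$. Then for every edge $uv\in E$, $$R_{u,v}\le \frac{1}{\tfrac12|N(u)\cap N(v)|+1}.$$ Moreover, if some biconnected component of $G$ is not a clique, then there is an edge $uv\in E$ for which this inequality is strict.
   Context: $\mathcal{N}_G$ is the electrical network on vertex set $V$ in which every edge of $G$ is a resistor of resistance $1$; the effective resistance $R_{u,v}$ is the voltage difference between $u$ and $v$ when a unit current is injected at $u$ and extracted at $v$. $N(u)=\{v\in V: uv\in E\}$ is the open neighbourhood of $u$. A biconnected component (block) of $G$ is a maximal connected subgraph of $G$ that has no cut vertex of its own. *)

theory Defs
  imports Main "HOL-Library.Transitive_Closure_Table" Complex_Main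
begin

definition simple_graph :: "'a set \<Rightarrow> ('a \<Rightarrow> 'a \<Rightarrow> bool) \<Rightarrow> bool" where
  "simple_graph V E \<longleftrightarrow> finite V \<and> (\<forall>x y. E x y \<longrightarrow> x \<in> V \<and> y \<in> V)
     \<and> (\<forall>x y. E x y \<longrightarrow> E y x) \<and> (\<forall>x. \<not> E x x)"

definition connected_on :: "('a \<Rightarrow> 'a \<Rightarrow> bool) \<Rightarrow> 'a set \<Rightarrow> bool" where
  "connected_on E S \<longleftrightarrow>
     (\<forall>x\<in>S. \<forall>y\<in>S. (\<lambda>a b. E a b \<and> a \<in> S \<and> b \<in> S)\<^sup>*\<^sup>* x y)"

definition nbhd :: "'a set \<Rightarrow> ('a \<Rightarrow> 'a \<Rightarrow> bool) \<Rightarrow> 'a \<Rightarrow> 'a set" where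
  "nbhd V E u = {v \<in> V. E u v}"

text \<open>Potential (voltage) phi in the unit-resistor network when a unit current is
injected at u and extracted at v: Kirchhoff's current law with Ohm's law
(current on edge w->x equals phi w - phi x).\<close>
definition unit_potential ::
  "'a set \<Rightarrow> ('a \<Rightarrow> 'a \<Rightarrow> bool) \<Rightarrow> 'a \<Rightarrow> 'a \<Rightarrow> ('a \<Rightarrow> real) \<Rightarrow> bool" where
  "unit_potential V E u v phi \<longleftrightarrow>
     (\<forall>w\<in>V. (\<Sum>x\<in>nbhd V E w. phi w - phi x) =
              (if w = u then 1 else if w = v then -1 else 0))"

definition eff_res :: "'a set \<Rightarrow> ('a \<Rightarrow> 'a \<Rightarrow> bool) \<Rightarrow> 'a \<Rightarrow> 'a \<Rightarrow> real" where
  "eff_res V E u v = (THE r. \<exists>phi. unit_potential V E u v phi \<and> r = phi u - phi v)"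

definition no_cut_vertex :: "('a \<Rightarrow> 'a \<Rightarrow> bool) \<Rightarrow> 'a set \<Rightarrow> bool" where
  "no_cut_vertex E B \<longleftrightarrow> (\<forall>w\<in>B. connected_on E (B - {w}))"

text \<open>Biconnected component (block), given by its vertex set (blocks are induced).\<close>
definition is_block :: "'a set \<Rightarrow> ('a \<Rightarrow> 'a \<Rightarrow> bool) \<Rightarrow> 'a set \<Rightarrow> bool" where
  "is_block V E B \<longleftrightarrow> B \<noteq> {} \<and> B \<subseteq> V \<and> connected_on E B \<and> no_cut_vertex E B \<and>
     (\<forall>B'. B \<subset> B' \<and> B' \<subseteq> V \<longrightarrow> \<not> (connected_on E B' \<and> no_cut_vertex E B'))"

definition is_clique :: "('a \<Rightarrow> 'a \<Rightarrow> bool) \<Rightarrow> 'a set \<Rightarrow> bool" where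
  "is_clique E B \<longleftrightarrow> (\<forall>x\<in>B. \<forall>y\<in>B. x \<noteq> y \<longrightarrow> E x y)"

end

theory Submission
  imports Defs "Jordan_Normal_Form.Determinant"
begin

text \<open>Let \<open>f\<close> be the potential of a unit current from \<open>u\<close> to \<open>v\<close> across an edge \<open>uv\<close>
and \<open>R = f u - f v\<close>. Summed over ordered pairs of adjacent vertices, the squared
potential drops add up to \<open>2 R\<close>. The edge \<open>uv\<close> contributes \<open>2 R\<^sup>2\<close> to this energy, and
every common neighbour \<open>w\<close> contributes \<open>2 (a\<^sup>2 + b\<^sup>2) = R\<^sup>2 + (a - b)\<^sup>2\<close> with
\<open>a = f u - f w\<close>, \<open>b = f w - f v\<close>. Hence \<open>(2 + |N(u) \<inter> N(v)|) R\<^sup>2 \<le> 2 R\<close>, which is the bound.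
Equality forces every edge at \<open>u\<close> outside the triangles on \<open>uv\<close>, and every edge leaving a
vertex off these triangles, to carry no current, and every common neighbour to sit at the
mean of \<open>f u\<close> and \<open>f v\<close>. A block that is not a clique contains an induced path \<open>x u v\<close> and
a path from \<open>x\<close> to \<open>v\<close> avoiding \<open>u\<close>; along it the potential would stay equal to \<open>f u\<close>,
which is impossible at \<open>v\<close>.\<close>

definition laplacian :: "'a set \<Rightarrow> ('a \<Rightarrow> 'a \<Rightarrow> bool) \<Rightarrow> ('a \<Rightarrow> real) \<Rightarrow> 'a \<Rightarrow> real" where
  "laplacian V E f x = (\<Sum>y\<in>nbhd V E x. f x - f y)"

lemma simple_graph_finite: "simple_graph V E \<Longrightarrow> finite V"
  by (simp add: simple_graph_def)

lemma simple_graph_sym: "simple_graph V E \<Longrightarrow> E x y \<Longrightarrow> E y x"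
  by (simp add: simple_graph_def)

lemma simple_graph_irrefl: "simple_graph V E \<Longrightarrow> E x y \<Longrightarrow> x \<noteq> y"
  by (auto simp: simple_graph_def)

lemma simple_graph_edge_in: "simple_graph V E \<Longrightarrow> E x y \<Longrightarrow> x \<in> V \<and> y \<in> V"
  by (simp add: simple_graph_def)

lemma finite_nbhd: "simple_graph V E \<Longrightarrow> finite (nbhd V E x)"
  by (simp add: simple_graph_def nbhd_def)

lemma unit_potential_iff_laplacian:
  "unit_potential V E u v f \<longleftrightarrow>
     (\<forall>w\<in>V. laplacian V E f w = (if w = u then 1 else if w = v then -1 else 0))"
  by (simp add: unit_potential_def laplacian_def)

lemma sum_nbhd_swap:
  assumes "simple_graph V E"
  shows "(\<Sum>x\<in>V. \<Sum>y\<in>nbhd V E x. F x y) = (\<Sum>x\<in>V. \<Sum>y\<in>nbhd V E x. F y x)"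
proof -
  have fin: "finite V" using assms by (rule simple_graph_finite)
  have "(\<Sum>x\<in>V. \<Sum>y\<in>nbhd V E x. F x y) = (\<Sum>x\<in>V. \<Sum>y\<in>{y. y \<in> V \<and> E x y}. F x y)"
    by (simp add: nbhd_def)
  also have "\<dots> = (\<Sum>y\<in>V. \<Sum>x\<in>{x. x \<in> V \<and> E x y}. F x y)"
    by (rule sum.swap_restrict[OF fin fin])
  also have "\<dots> = (\<Sum>y\<in>V. \<Sum>x\<in>nbhd V E y. F x y)"
    using simple_graph_sym[OF assms] unfolding nbhd_def by (intro sum.cong refl) blast+
  finally show ?thesis .
qed

lemma sum_laplacian_eq_0:
  assumes "simple_graph V E"
  shows "(\<Sum>x\<in>V. laplacian V E f x) = 0"
proof -
  have "(\<Sum>x\<in>V. laplacian V E f x) = (\<Sum>x\<in>V. \<Sum>y\<in>nbhd V E x. f y - f x)"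
    unfolding laplacian_def by (rule sum_nbhd_swap[OF assms])
  also have "\<dots> = - (\<Sum>x\<in>V. laplacian V E f x)"
    by (simp add: laplacian_def sum_negf[symmetric])
  finally show ?thesis by simp
qed

lemma green_identity:
  assumes "simple_graph V E"
  shows "(\<Sum>x\<in>V. \<Sum>y\<in>nbhd V E x. (f x - f y) * (h x - h y)) = 2 * (\<Sum>x\<in>V. h x * laplacian V E f x)"
proof -
  have "(\<Sum>x\<in>V. \<Sum>y\<in>nbhd V E x. (f x - f y) * (h x - h y))
      = (\<Sum>x\<in>V. \<Sum>y\<in>nbhd V E x. (f x - f y) * h x) - (\<Sum>x\<in>V. \<Sum>y\<in>nbhd V E x. (f x - f y) * h y)"
    by (simp add: right_diff_distrib sum_subtractf)
  also have "(\<Sum>x\<in>V. \<Sum>y\<in>nbhd V E x. (f x - f y) * h y) = (\<Sum>x\<in>V. \<Sum>y\<in>nbhd V E x. (f y - f x) * h x)"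
    by (rule sum_nbhd_swap[OF assms])
  also have "\<dots> = - (\<Sum>x\<in>V. \<Sum>y\<in>nbhd V E x. (f x - f y) * h x)"
    by (simp add: sum_negf[symmetric] algebra_simps)
  finally show ?thesis
    by (simp add: laplacian_def sum_distrib_left sum_distrib_right mult.commute)
qed

lemma harmonic_edge_eq:
  assumes g: "simple_graph V E" and harmonic: "\<And>x. x \<in> V \<Longrightarrow> laplacian V E f x = 0"
    and "E x y"
  shows "f x = f y"
proof -
  have fin: "finite V" using g by (rule simple_graph_finite)
  have "(\<Sum>x\<in>V. \<Sum>y\<in>nbhd V E x. (f x - f y)\<^sup>2) = 0"
    using green_identity[OF g, of f f] harmonic by (simp add: power2_eq_square)
  then have "\<forall>x\<in>V. \<forall>y\<in>nbhd V E x. (f x - f y)\<^sup>2 = 0"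
    using fin finite_nbhd[OF g] by (simp add: sum_nonneg sum_nonneg_eq_0_iff)
  then show ?thesis
    using assms(3) simple_graph_edge_in[OF g assms(3)] by (simp add: nbhd_def)
qed

lemma harmonic_imp_const:
  assumes g: "simple_graph V E" and c: "connected_on E V"
    and harmonic: "\<And>x. x \<in> V \<Longrightarrow> laplacian V E f x = 0" and "x \<in> V" "y \<in> V"
  shows "f x = f y"
proof -
  have "(\<lambda>a b. E a b \<and> a \<in> V \<and> b \<in> V)\<^sup>*\<^sup>* x y"
    using c assms(4,5) by (simp add: connected_on_def)
  then show ?thesis
    by (induction rule: rtranclp_induct) (metis harmonic_edge_eq[OF g harmonic])+
qed

lemma mat_vec_solvable_if_kernel_trivial:
  fixes M :: "'a :: field mat"
  assumes M: "M \<in> carrier_mat n n"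
    and kernel_trivial: "\<And>z. z \<in> carrier_vec n \<Longrightarrow> M *\<^sub>v z = 0\<^sub>v n \<Longrightarrow> z = 0\<^sub>v n"
    and b: "b \<in> carrier_vec n"
  shows "\<exists>z\<in>carrier_vec n. M *\<^sub>v z = b"
proof -
  have "det M \<noteq> 0"
    using det_0_iff_vec_prod_zero_field[OF M] kernel_trivial by blast
  then obtain M' where M': "M' \<in> carrier_mat n n" "M * M' = 1\<^sub>m n"
    using det_non_zero_imp_unit[OF M, of "()"] by (auto simp: Units_def ring_mat_def)
  have "M *\<^sub>v (M' *\<^sub>v b) = b"
    using assoc_mult_mat_vec[OF M M'(1) b] M'(2) b by simp
  then show ?thesis using M'(1) b by (intro bexI[of _ "M' *\<^sub>v b"]) auto
qed

lemma linear_system_solvable: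
  fixes a :: "'a \<Rightarrow> 'a \<Rightarrow> real"
  assumes fin: "finite V"
    and kernel_trivial: "\<And>f x. \<forall>z\<in>V. (\<Sum>y\<in>V. a z y * f y) = 0 \<Longrightarrow> x \<in> V \<Longrightarrow> f x = 0"
  shows "\<exists>f. \<forall>x\<in>V. (\<Sum>y\<in>V. a x y * f y) = b x"
proof -
  obtain xs where xs: "set xs = V" "distinct xs"
    using finite_distinct_list[OF fin] by blast
  define n where "n = length xs"
  have bij: "bij_betw ((!) xs) {..<n} V"
    by (rule bij_betw_nth) (use xs n_def in auto)
  define idx where "idx = the_inv_into {..<n} ((!) xs)"
  have idx: "idx y < n" "xs ! idx y = y" if "y \<in> V" for y
    using that bij_betw_the_inv_into[OF bij] f_the_inv_into_f_bij_betw[OF bij]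
    by (auto simp: idx_def bij_betw_def)
  have idx_nth: "idx (xs ! i) = i" if "i < n" for i
    using that the_inv_into_f_f[OF bij_betw_imp_inj_on[OF bij]] by (simp add: idx_def)
  define M where "M = mat n n (\<lambda>(i, j). a (xs ! i) (xs ! j))"
  have M: "M \<in> carrier_mat n n" by (simp add: M_def)
  have M_mult: "(M *\<^sub>v z) $ i = (\<Sum>y\<in>V. a (xs ! i) y * z $ idx y)"
    if "z \<in> carrier_vec n" "i < n" for z i
  proof -
    have "(M *\<^sub>v z) $ i = (\<Sum>j\<in>{..<n}. a (xs ! i) (xs ! j) * z $ idx (xs ! j))"
      using that idx_nth by (simp add: M_def scalar_prod_def atLeast0LessThan)
    also have "\<dots> = (\<Sum>y\<in>V. a (xs ! i) y * z $ idx y)"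
      by (rule sum.reindex_bij_betw[OF bij])
    finally show ?thesis .
  qed
  have "z = 0\<^sub>v n" if z: "z \<in> carrier_vec n" "M *\<^sub>v z = 0\<^sub>v n" for z
  proof -
    have "\<forall>x\<in>V. (\<Sum>y\<in>V. a x y * z $ idx y) = 0"
      using M_mult[OF z(1)] z(2) idx by (metis index_zero_vec(1))
    then have "z $ idx x = 0" if "x \<in> V" for x
      using kernel_trivial[of "\<lambda>y. z $ idx y"] that by blast
    then show "z = 0\<^sub>v n"
      using z(1) idx_nth bij by (intro eq_vecI) (fastforce simp: bij_betw_def)+
  qed
  then obtain z where z: "z \<in> carrier_vec n" "M *\<^sub>v z = vec n (\<lambda>i. b (xs ! i))"
    using mat_vec_solvable_if_kernel_trivial[OF M] by (meson vec_carrier)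
  then have "\<forall>x\<in>V. (\<Sum>y\<in>V. a x y * z $ idx y) = b x"
    using M_mult[OF z(1)] idx by (metis index_vec)
  then show ?thesis by (intro exI[of _ "\<lambda>y. z $ idx y"]) simp
qed

text \<open>The system solved is the Laplacian plus the all-ones matrix: it is nonsingular on a
connected graph, and its solution for a right-hand side of total sum zero has total sum zero,
so it solves the Laplacian system as well.\<close>

lemma laplacian_solvable:
  assumes g: "simple_graph V E" and c: "connected_on E V" and b: "(\<Sum>x\<in>V. b x) = 0"
  shows "\<exists>f. \<forall>x\<in>V. laplacian V E f x = b x"
proof -
  have fin: "finite V" using g by (rule simple_graph_finite)
  define a where "a x y = (if y = x then real (card (nbhd V E x)) else 0) - (if E x y then 1 else 0) + 1"
    for x y
  have a: "(\<Sum>y\<in>V. a x y * f y) = laplacian V E f x + sum f V" if "x \<in> V" for x f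
  proof -
    have "(\<Sum>y\<in>V. a x y * f y)
        = (\<Sum>y\<in>V. (if y = x then real (card (nbhd V E x)) * f y else 0)
                      - (if E x y then f y else 0) + f y)"
      by (intro sum.cong) (auto simp: a_def algebra_simps)
    also have "\<dots> = (\<Sum>y\<in>V. if y = x then real (card (nbhd V E x)) * f y else 0)
          - (\<Sum>y\<in>V. if E x y then f y else 0) + sum f V"
      by (simp add: sum.distrib sum_subtractf)
    also have "\<dots> = laplacian V E f x + sum f V"
      using that fin by (simp add: laplacian_def sum_subtractf sum.inter_filter nbhd_def)
    finally show ?thesis .
  qed
  have total: "(\<Sum>x\<in>V. \<Sum>y\<in>V. a x y * f y) = real (card V) * sum f V" for f
    using a sum_laplacian_eq_0[OF g, of f] by (simp add: sum.distrib)
  have sum_zero: "sum f V = 0" if "real (card V) * sum f V = 0" "x \<in> V" for f x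
    using that fin by (auto simp: card_gt_0_iff)
  have "\<exists>f. \<forall>x\<in>V. (\<Sum>y\<in>V. a x y * f y) = b x"
  proof (rule linear_system_solvable[OF fin])
    fix f x assume ker: "\<forall>z\<in>V. (\<Sum>y\<in>V. a z y * f y) = 0" and x: "x \<in> V"
    then have "sum f V = 0" using sum_zero[of f] total[of f] by simp
    then have "\<forall>y\<in>V. laplacian V E f y = 0" using ker a by simp
    then have "\<forall>y\<in>V. f y = f x" using harmonic_imp_const[OF g c] x by blast
    then have "sum f V = real (card V) * f x" by simp
    then show "f x = 0" using \<open>sum f V = 0\<close> x fin by (auto simp: card_gt_0_iff)
  qed
  then obtain f where f: "\<forall>x\<in>V. (\<Sum>y\<in>V. a x y * f y) = b x" by blast
  then have "sum f V = 0" if "x \<in> V" for x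
    using total[of f] b sum_zero[of f] that by simp
  then show ?thesis using f a by (metis add.right_neutral)
qed

lemma unit_potential_exists:
  assumes g: "simple_graph V E" and c: "connected_on E V" and "u \<in> V" "v \<in> V" "u \<noteq> v"
  shows "\<exists>f. unit_potential V E u v f"
proof -
  have "(\<Sum>x\<in>V. if x = u then 1 else if x = v then -1 else 0 :: real) = 0"
    using assms(3-5) simple_graph_finite[OF g] by (simp add: sum.If_cases Int_absorb1 Diff_eq[symmetric])
  from laplacian_solvable[OF g c this] show ?thesis
    by (simp add: unit_potential_iff_laplacian)
qed

lemma eff_res_eq_potential_diff:
  assumes g: "simple_graph V E" and c: "connected_on E V" and "u \<in> V" "v \<in> V"
    and f: "unit_potential V E u v f"
  shows "eff_res V E u v = f u - f v"
  unfolding eff_res_def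
proof (rule the_equality)
  show "\<exists>phi. unit_potential V E u v phi \<and> f u - f v = phi u - phi v" using f by blast
next
  fix r assume "\<exists>phi. unit_potential V E u v phi \<and> r = phi u - phi v"
  then obtain phi where phi: "unit_potential V E u v phi" "r = phi u - phi v" by blast
  have "laplacian V E (\<lambda>x. phi x - f x) x = laplacian V E phi x - laplacian V E f x" for x
    by (simp add: laplacian_def sum_subtractf[symmetric] algebra_simps)
  then have "laplacian V E (\<lambda>x. phi x - f x) x = 0" if "x \<in> V" for x
    using that phi(1) f by (simp add: unit_potential_iff_laplacian)
  from harmonic_imp_const[OF g c this assms(3,4)] show "r = f u - f v" using phi(2) by simp
qed

lemma unit_potential_energy:
  assumes g: "simple_graph V E" and "u \<in> V" "v \<in> V" "u \<noteq> v"
    and f: "unit_potential V E u v f"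
  shows "(\<Sum>x\<in>V. \<Sum>y\<in>nbhd V E x. (f x - f y)\<^sup>2) = 2 * (f u - f v)"
proof -
  have "(\<Sum>x\<in>V. \<Sum>y\<in>nbhd V E x. (f x - f y)\<^sup>2) = 2 * (\<Sum>x\<in>V. f x * laplacian V E f x)"
    using green_identity[OF g, of f f] by (simp add: power2_eq_square)
  also have "(\<Sum>x\<in>V. f x * laplacian V E f x)
      = (\<Sum>x\<in>V. (if x = u then f x else 0) - (if x = v then f x else 0))"
    using f \<open>u \<noteq> v\<close> by (intro sum.cong) (auto simp: unit_potential_iff_laplacian)
  also have "\<dots> = f u - f v"
    using assms(2,3) simple_graph_finite[OF g] by (simp add: sum_subtractf)
  finally show ?thesis .
qed

lemma unit_potential_energy_ge_triangles:
  assumes g: "simple_graph V E" and e: "E u v" and f: "unit_potential V E u v f"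
  defines "C \<equiv> nbhd V E u \<inter> nbhd V E v"
  shows "(f u - f v)\<^sup>2 + (f v - f u)\<^sup>2
      + (\<Sum>w\<in>C. (f u - f w)\<^sup>2 + (f v - f w)\<^sup>2 + ((f w - f u)\<^sup>2 + (f w - f v)\<^sup>2))
      + (\<Sum>y\<in>nbhd V E u - insert v C. (f u - f y)\<^sup>2)
      + (\<Sum>x\<in>V - insert u (insert v C). \<Sum>y\<in>nbhd V E x. (f x - f y)\<^sup>2) \<le> 2 * (f u - f v)"
proof -
  define t where "t x y = (f x - f y)\<^sup>2" for x y
  define s where "s x = (\<Sum>y\<in>nbhd V E x. t x y)" for x
  have fin: "finite V" using g by (rule simple_graph_finite)
  have uV: "u \<in> V" and vV: "v \<in> V" using simple_graph_edge_in[OF g e] by auto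
  have uv: "u \<noteq> v" using simple_graph_irrefl[OF g e] .
  have CV: "C \<subseteq> V" by (auto simp: C_def nbhd_def)
  then have finC: "finite C" using fin finite_subset by blast
  have uC: "u \<notin> C" and vC: "v \<notin> C"
    using simple_graph_irrefl[OF g] by (auto simp: C_def nbhd_def)
  have "2 * (f u - f v) = (\<Sum>x\<in>V. s x)"
    using unit_potential_energy[OF g uV vV uv f] by (simp add: s_def t_def)
  also have "\<dots> = (\<Sum>x\<in>insert u (insert v C). s x) + (\<Sum>x\<in>V - insert u (insert v C). s x)"
    using CV uV vV fin sum.subset_diff[of "insert u (insert v C)" V s] by simp
  also have "(\<Sum>x\<in>insert u (insert v C). s x) = s u + s v + (\<Sum>w\<in>C. s w)"
    using finC uC vC uv by simp
  finally have energy: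
    "2 * (f u - f v) = s u + s v + (\<Sum>w\<in>C. s w) + (\<Sum>x\<in>V - insert u (insert v C). s x)" .
  have "insert v C \<subseteq> nbhd V E u" using e vV by (auto simp: C_def nbhd_def)
  then have s_u: "s u = t u v + (\<Sum>w\<in>C. t u w) + (\<Sum>y\<in>nbhd V E u - insert v C. t u y)"
    using finite_nbhd[OF g] finC vC sum.subset_diff[of "insert v C" "nbhd V E u" "t u"]
    by (simp add: s_def)
  have "insert u C \<subseteq> nbhd V E v" using simple_graph_sym[OF g e] uV by (auto simp: C_def nbhd_def)
  then have s_v: "t v u + (\<Sum>w\<in>C. t v w) \<le> s v"
    using sum_mono2[OF finite_nbhd[OF g, of v], of "insert u C" "t v"] finC uC by (simp add: s_def t_def)
  have "t w u + t w v \<le> s w" if "w \<in> C" for w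
  proof -
    have "{u, v} \<subseteq> nbhd V E w" using that uV vV simple_graph_sym[OF g] by (auto simp: C_def nbhd_def)
    then show ?thesis
      using sum_mono2[OF finite_nbhd[OF g, of w], of "{u, v}" "t w"] uv by (simp add: s_def t_def)
  qed
  then have s_C: "(\<Sum>w\<in>C. t w u + t w v) \<le> (\<Sum>w\<in>C. s w)" by (rule sum_mono)
  have "t u v + t v u + (\<Sum>w\<in>C. t u w + t v w + (t w u + t w v))
      + (\<Sum>y\<in>nbhd V E u - insert v C. t u y) + (\<Sum>x\<in>V - insert u (insert v C). s x)
      \<le> 2 * (f u - f v)"
    using energy s_u s_v s_C by (simp add: sum.distrib)
  then show ?thesis by (simp add: s_def t_def)
qed

lemma edge_energy_bound:
  assumes g: "simple_graph V E" and e: "E u v" and f: "unit_potential V E u v f"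
  defines "C \<equiv> nbhd V E u \<inter> nbhd V E v" and "R \<equiv> f u - f v"
  shows "(2 + real (card C)) * R\<^sup>2 + ((\<Sum>w\<in>C. (f u + f v - 2 * f w)\<^sup>2)
      + (\<Sum>y\<in>nbhd V E u - insert v C. (f u - f y)\<^sup>2)
      + (\<Sum>x\<in>V - insert u (insert v C). \<Sum>y\<in>nbhd V E x. (f x - f y)\<^sup>2)) \<le> 2 * R"
proof -
  have "(f u - f w)\<^sup>2 + (f v - f w)\<^sup>2 + ((f w - f u)\<^sup>2 + (f w - f v)\<^sup>2) = R\<^sup>2 + (f u + f v - 2 * f w)\<^sup>2"
    for w by (simp add: R_def power2_eq_square algebra_simps)
  then have "(\<Sum>w\<in>C. (f u - f w)\<^sup>2 + (f v - f w)\<^sup>2 + ((f w - f u)\<^sup>2 + (f w - f v)\<^sup>2))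
      = real (card C) * R\<^sup>2 + (\<Sum>w\<in>C. (f u + f v - 2 * f w)\<^sup>2)"
    by (simp add: sum.distrib)
  moreover have "(f u - f v)\<^sup>2 + (f v - f u)\<^sup>2 = 2 * R\<^sup>2"
    by (simp add: R_def power2_eq_square algebra_simps)
  moreover have "(2 + real (card C)) * R\<^sup>2 = 2 * R\<^sup>2 + real (card C) * R\<^sup>2"
    by (simp add: algebra_simps)
  ultimately show ?thesis
    using unit_potential_energy_ge_triangles[OF g e f] by (simp add: C_def R_def)
qed

lemma quadratic_le_bound:
  fixes c R S :: real
  assumes "0 \<le> c" "0 \<le> S" and quadratic: "(2 + c) * R\<^sup>2 + S \<le> 2 * R"
  shows "R \<le> 1 / (c / 2 + 1)" and "1 / (c / 2 + 1) \<le> R \<Longrightarrow> S = 0 \<and> 0 < R"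
proof -
  have bound: "1 / (c / 2 + 1) = 2 / (2 + c)" using assms(1) by (simp add: field_simps)
  show "R \<le> 1 / (c / 2 + 1)"
  proof (cases "0 < R")
    case True
    have "((2 + c) * R) * R \<le> 2 * R" using quadratic assms(2) by (simp add: power2_eq_square)
    then have "(2 + c) * R \<le> 2" using True by simp
    then show ?thesis using assms(1) by (simp add: bound field_simps)
  next
    case False
    moreover have "0 < 1 / (c / 2 + 1)" using assms(1) by simp
    ultimately show ?thesis by linarith
  qed
  assume "1 / (c / 2 + 1) \<le> R"
  then have "2 / (2 + c) \<le> R" by (simp add: bound)
  moreover have "0 < 2 / (2 + c)" using assms(1) by simp
  ultimately have R: "0 < R" "2 \<le> (2 + c) * R"
    using assms(1) by (linarith, simp add: field_simps)
  then have "2 * R \<le> ((2 + c) * R) * R" by simp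
  then have "2 * R \<le> (2 + c) * R\<^sup>2" by (simp add: power2_eq_square mult.assoc)
  then show "S = 0 \<and> 0 < R" using quadratic assms(2) R(1) by linarith
qed

lemma eff_res_edge_le:
  assumes g: "simple_graph V E" and c: "connected_on E V" and e: "E u v"
  shows "eff_res V E u v \<le> 1 / (real (card (nbhd V E u \<inter> nbhd V E v)) / 2 + 1)"
proof -
  have uV: "u \<in> V" and vV: "v \<in> V" using simple_graph_edge_in[OF g e] by auto
  obtain f where f: "unit_potential V E u v f"
    using unit_potential_exists[OF g c uV vV simple_graph_irrefl[OF g e]] by blast
  show ?thesis
    using quadratic_le_bound(1)[OF _ _ edge_energy_bound[OF g e f]] eff_res_eq_potential_diff[OF g c uV vV f]
    by (simp add: sum_nonneg)
qed

lemma eff_res_edge_less: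
  assumes g: "simple_graph V E" and c: "connected_on E V" and e: "E u v"
    and x: "E u x" "x \<noteq> v" "\<not> E x v"
    and detour: "(\<lambda>a b. E a b \<and> b \<noteq> u)\<^sup>*\<^sup>* x v"
  shows "eff_res V E u v < 1 / (real (card (nbhd V E u \<inter> nbhd V E v)) / 2 + 1)"
proof (rule ccontr)
  let ?C = "nbhd V E u \<inter> nbhd V E v"
  let ?A = "insert u (insert v ?C)"
  have fin: "finite V" using g by (rule simple_graph_finite)
  have uV: "u \<in> V" and vV: "v \<in> V" using simple_graph_edge_in[OF g e] by auto
  obtain f where f: "unit_potential V E u v f"
    using unit_potential_exists[OF g c uV vV simple_graph_irrefl[OF g e]] by blast
  let ?mid = "\<Sum>w\<in>?C. (f u + f v - 2 * f w)\<^sup>2"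
  let ?at_u = "\<Sum>y\<in>nbhd V E u - insert v ?C. (f u - f y)\<^sup>2"
  let ?far = "\<Sum>x\<in>V - ?A. \<Sum>y\<in>nbhd V E x. (f x - f y)\<^sup>2"
  have nonneg: "0 \<le> ?mid" "0 \<le> ?at_u" "0 \<le> ?far" by (simp_all add: sum_nonneg)
  assume "\<not> eff_res V E u v < 1 / (real (card ?C) / 2 + 1)"
  then have "1 / (real (card ?C) / 2 + 1) \<le> f u - f v"
    using eff_res_eq_potential_diff[OF g c uV vV f] by simp
  then have "?mid + ?at_u + ?far = 0 \<and> 0 < f u - f v"
    using quadratic_le_bound(2)[OF _ _ edge_energy_bound[OF g e f]] nonneg by simp
  then have "?mid = 0" "?at_u = 0" "?far = 0" and R: "f v < f u" using nonneg by linarith+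
  then have mid: "\<forall>w\<in>?C. f u + f v = 2 * f w"
    and at_u: "\<forall>y\<in>nbhd V E u - insert v ?C. f u = f y"
    and far: "\<forall>x\<in>V - ?A. \<forall>y\<in>nbhd V E x. f x = f y"
    using fin finite_nbhd[OF g] finite_subset[of ?C V]
    by (auto simp: nbhd_def sum_nonneg sum_nonneg_eq_0_iff)
  have "y \<notin> ?A \<and> f y = f u" if "(\<lambda>a b. E a b \<and> b \<noteq> u)\<^sup>*\<^sup>* x y" for y
    using that
  proof (induction rule: rtranclp_induct)
    case base
    have "x \<notin> ?A"
      using x simple_graph_irrefl[OF g x(1)] simple_graph_sym[OF g, of v x] by (auto simp: nbhd_def)
    moreover have "x \<in> nbhd V E u" using x(1) simple_graph_edge_in[OF g x(1)] by (simp add: nbhd_def)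
    ultimately have "f u = f x" using at_u by blast
    with \<open>x \<notin> ?A\<close> show ?case by simp
  next
    case (step y z)
    then have "y \<in> V - ?A" "z \<in> nbhd V E y"
      using simple_graph_edge_in[OF g] by (auto simp: nbhd_def)
    then have "f z = f u" using far step.IH by metis
    moreover from this have "z \<noteq> v" "z \<notin> ?C" using R mid by force+
    ultimately show ?case using step(2) by simp
  qed
  from this[OF detour] show False by simp
qed

lemma not_clique_obtains_induced_path:
  assumes "connected_on E B" "\<not> is_clique E B"
  obtains x u v where "x \<in> B" "u \<in> B" "v \<in> B" "E x u" "E u v" "x \<noteq> v" "\<not> E x v"
proof -
  have "x = y \<or> E x y" if "x \<in> B" "y \<in> B"
    and no_induced_path: "\<nexists>x u v. x \<in> B \<and> u \<in> B \<and> v \<in> B \<and> E x u \<and> E u v \<and> x \<noteq> v \<and> \<not> E x v" for x y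
  proof -
    have "(\<lambda>a b. E a b \<and> a \<in> B \<and> b \<in> B)\<^sup>*\<^sup>* x y" using assms(1) that(1,2) by (simp add: connected_on_def)
    then show ?thesis by (induction rule: rtranclp_induct) (use no_induced_path that(1) in blast)+
  qed
  then show ?thesis using that assms(2) unfolding is_clique_def by blast
qed

theorem mainTheorem5:
  fixes V :: "'a set" and E :: "'a \<Rightarrow> 'a \<Rightarrow> bool"
  assumes "simple_graph V E" and "V \<noteq> {}" and "connected_on E V"
  shows "(\<forall>u v. E u v \<longrightarrow>
            eff_res V E u v \<le> 1 / (real (card (nbhd V E u \<inter> nbhd V E v)) / 2 + 1))
       \<and> ((\<exists>B. is_block V E B \<and> \<not> is_clique E B) \<longrightarrow>
            (\<exists>u v. E u v \<and>
              eff_res V E u v < 1 / (real (card (nbhd V E u \<inter> nbhd V E v)) / 2 + 1)))"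
proof (intro conjI allI impI)
  note g = assms(1) and c = assms(3)
  show "eff_res V E u v \<le> 1 / (real (card (nbhd V E u \<inter> nbhd V E v)) / 2 + 1)" if "E u v" for u v
    using eff_res_edge_le[OF g c that] .
  assume "\<exists>B. is_block V E B \<and> \<not> is_clique E B"
  then obtain B where B: "connected_on E B" "no_cut_vertex E B" "\<not> is_clique E B"
    by (auto simp: is_block_def)
  obtain x u v where xuv: "x \<in> B" "u \<in> B" "v \<in> B" "E x u" "E u v" "x \<noteq> v" "\<not> E x v"
    by (rule not_clique_obtains_induced_path[OF B(1,3)])
  have "x \<noteq> u" "u \<noteq> v" using simple_graph_irrefl[OF g] xuv(4,5) by auto
  then have "(\<lambda>a b. E a b \<and> a \<in> B - {u} \<and> b \<in> B - {u})\<^sup>*\<^sup>* x v"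
    using B(2) xuv(1-3) unfolding no_cut_vertex_def connected_on_def by blast
  then have "(\<lambda>a b. E a b \<and> b \<noteq> u)\<^sup>*\<^sup>* x v"
    by (rule rtranclp_mono[THEN predicate2D, rotated]) auto
  then show "\<exists>u v. E u v \<and> eff_res V E u v < 1 / (real (card (nbhd V E u \<inter> nbhd V E v)) / 2 + 1)"
    using eff_res_edge_less[OF g c xuv(5) simple_graph_sym[OF g xuv(4)] xuv(6,7)] xuv(5) by blast
qed

end
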